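(* Let $G=(S,R,\rho)$ be a $q$-linear grammar and $D$ its $q$-derivative. Then for all $m,n\ge1$ and $f\in\mathbb{E}$, \[ D^n(\uparrow^m f)=q^{nm}\uparrow^m\!\big(D^n(f)\big). \]
   Context: $\mathbb{K}$ is a commutative ring with unity and characteristic zero, $q$ an indeterminate. For a set $S$ of master variables, $\mathbb{S}=\{s_i:s\in S,\ i\ge0\}$ is a set of non-commuting variables, $F(\mathbb{S})$ the free group on $\mathbb{S}$, $\mathbb{E}=\mathbb{K}[q][F(\mathbb{S})]$ its group algebra. A rule $R$ assigns to each $s_i$ an element $R(s_i)\in\mathbb{E}$, extended by $R(s_i^{-1})=-s_i^{-1}R(s_i)s_{i+1}^{-1}$. The up-arrow $\uparrow$ is the $\mathbb{K}[q]$-linear map replacing each letter $s_i^{\pm1}$ of a word by $s_{i+1}^{\pm1}$, $\uparrow^k$ its $k$-th iterate. An order is a map rewriting each word by permuting its letters; KSO is the identity. A $q$-grammar is $(S,R,\rho)$ with $\rho$ an order; its $q$-derivative is the $\mathbb{K}[q]$-linear map with $D(w_1\cdots w_n)=\sum_{j=1}^n\rho\big(w_1\cdots w_{j-1}R(w_j)\uparrow(w_{j+1}\cdots w_n)\big)$ for letters $w_j\in\mathbb{S}\cup\mathbb{S}^{-1}$, $D^0=\mathrm{id}$, $D^k=D\circ D^{k-1}$. $G$ is $q$-linear if $\rho=\mathrm{KSO}$ and $R(s_{i+1})=q\uparrow R(s_i)$ for every $s_i\in\mathbb{S}$. *)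

theory Defs
  imports "HOL-Library.Poly_Mapping" "HOL-Computational_Algebra.Polynomial"
begin

text \<open>Letters of the free group on the variables s_i (s in the master type 's, i a nat):
  ((s,i),True) is s_i and ((s,i),False) is s_i^{-1}.\<close>

type_synonym 's letter = "('s \<times> nat) \<times> bool"

fun reduce :: "'s letter list \<Rightarrow> 's letter list" where
  "reduce [] = []"
| "reduce (x # xs) =
     (case reduce xs of
        [] \<Rightarrow> [x]
      | y # ys \<Rightarrow> (if fst y = fst x \<and> snd y \<noteq> snd x then ys else x # y # ys))"

typedef 's fgw = "{w :: 's letter list. reduce w = w}"
  by (rule exI[of _ "[]"]) simp

definition word_of :: "'s letter list \<Rightarrow> 's fgw" where
  "word_of w = Abs_fgw (reduce w)"

definition gmul :: "'s fgw \<Rightarrow> 's fgw \<Rightarrow> 's fgw" where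
  "gmul a b = word_of (Rep_fgw a @ Rep_fgw b)"

type_synonym ('s, 'k) E = "'s fgw \<Rightarrow>\<^sub>0 'k poly"

definition qvar :: "'k::comm_ring_1 poly" where
  "qvar = [:0, 1:]"

definition emul :: "('s, 'k::comm_ring_1) E \<Rightarrow> ('s, 'k) E \<Rightarrow> ('s, 'k) E" where
  "emul f g = (\<Sum>a\<in>Poly_Mapping.keys f. \<Sum>b\<in>Poly_Mapping.keys g.
                 Poly_Mapping.single (gmul a b) (Poly_Mapping.lookup f a * Poly_Mapping.lookup g b))"

definition escale :: "'k::comm_ring_1 poly \<Rightarrow> ('s, 'k) E \<Rightarrow> ('s, 'k) E" where
  "escale c f = (\<Sum>a\<in>Poly_Mapping.keys f. Poly_Mapping.single a (c * Poly_Mapping.lookup f a))"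

definition eword :: "'s letter list \<Rightarrow> ('s, 'k::comm_ring_1) E" where
  "eword w = Poly_Mapping.single (word_of w) 1"

definition elin :: "('s fgw \<Rightarrow> ('s, 'k::comm_ring_1) E) \<Rightarrow> ('s, 'k) E \<Rightarrow> ('s, 'k) E" where
  "elin h f = (\<Sum>a\<in>Poly_Mapping.keys f. escale (Poly_Mapping.lookup f a) (h a))"

definition up_letter :: "'s letter \<Rightarrow> 's letter" where
  "up_letter l = (((fst (fst l)), Suc (snd (fst l))), snd l)"

definition up :: "('s, 'k::comm_ring_1) E \<Rightarrow> ('s, 'k) E" where
  "up = elin (\<lambda>a. eword (map up_letter (Rep_fgw a)))"

definition is_order :: "('s fgw \<Rightarrow> 's fgw) \<Rightarrow> bool" where
  "is_order \<rho> \<longleftrightarrow> (\<forall>w. mset (Rep_fgw (\<rho> w)) = mset (Rep_fgw w))"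

definition KSO :: "'s fgw \<Rightarrow> 's fgw" where
  "KSO = id"

definition rule_letter :: "('s \<times> nat \<Rightarrow> ('s, 'k::comm_ring_1) E) \<Rightarrow> 's letter \<Rightarrow> ('s, 'k) E" where
  "rule_letter R l =
     (if snd l then R (fst l)
      else - emul (emul (eword [l]) (R (fst l))) (eword [((fst (fst l), Suc (snd (fst l))), False)]))"

definition qD_word :: "('s \<times> nat \<Rightarrow> ('s, 'k::comm_ring_1) E) \<Rightarrow> ('s fgw \<Rightarrow> 's fgw)
                      \<Rightarrow> 's letter list \<Rightarrow> ('s, 'k) E" where
  "qD_word R \<rho> w = (\<Sum>j<length w.
      elin (\<lambda>a. Poly_Mapping.single (\<rho> a) 1)
        (emul (emul (eword (take j w)) (rule_letter R (w ! j)))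
              (up (eword (drop (Suc j) w)))))"

definition qD :: "('s \<times> nat \<Rightarrow> ('s, 'k::comm_ring_1) E) \<Rightarrow> ('s fgw \<Rightarrow> 's fgw)
                  \<Rightarrow> ('s, 'k) E \<Rightarrow> ('s, 'k) E" where
  "qD R \<rho> = elin (\<lambda>a. qD_word R \<rho> (Rep_fgw a))"

definition q_linear :: "('s \<times> nat \<Rightarrow> ('s, 'k::comm_ring_1) E) \<Rightarrow> ('s fgw \<Rightarrow> 's fgw) \<Rightarrow> bool" where
  "q_linear R \<rho> \<longleftrightarrow> is_order \<rho> \<and> \<rho> = KSO \<and>
     (\<forall>s i. R (s, Suc i) = escale qvar (up (R (s, i))))"

end

theory Submission
  imports Defs
begin

(* Shifting indices s_i |-> s_(i+1) is an endomorphism of the free group, so the up-arrow is a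
   K[q]-algebra endomorphism of E. Therefore q-linearity R(s_(i+1)) = q up(R(s_i)) propagates to
   inverse letters, R(up w) = q up(R(w)) for every letter w, and comparing the summands of
   D(up word) and up(D(word)) gives D o up = q up o D. Two K[q]-linear maps commuting up to the
   scalar q satisfy D^n o up^m = q^(nm) up^m o D^n. *)

definition freely_reduced :: "'s letter list \<Rightarrow> bool" where
  "freely_reduced w \<longleftrightarrow> successively (\<lambda>x y. \<not> (fst y = fst x \<and> snd y \<noteq> snd x)) w"

lemma freely_reduced_reduce: "freely_reduced (reduce w)"
  by (induction w) (auto simp: freely_reduced_def successively_Cons split: list.split)

lemma reduce_freely_reduced: "freely_reduced w \<Longrightarrow> reduce w = w"
  by (induction w) (auto simp: freely_reduced_def successively_Cons split: list.split)

lemma reduce_reduce [simp]: "reduce (reduce w) = reduce w"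
  by (rule reduce_freely_reduced[OF freely_reduced_reduce])

lemma Rep_word_of [simp]: "Rep_fgw (word_of w) = reduce w"
  unfolding word_of_def by (rule Abs_fgw_inverse) simp

lemma word_of_reduce [simp]: "word_of (reduce w) = word_of w"
  unfolding word_of_def by simp

lemma reduce_map_up_letter: "reduce (map up_letter w) = map up_letter (reduce w)"
  by (induction w) (auto simp: up_letter_def prod_eq_iff split: list.split)

definition up_fgw :: "'s fgw \<Rightarrow> 's fgw" where
  "up_fgw a = word_of (map up_letter (Rep_fgw a))"

lemma up_fgw_word_of: "up_fgw (word_of w) = word_of (map up_letter w)"
  by (metis Rep_word_of reduce_map_up_letter up_fgw_def word_of_reduce)

lemma Rep_up_fgw: "Rep_fgw (up_fgw a) = map up_letter (Rep_fgw a)"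
  using Rep_fgw[of a] by (simp add: up_fgw_def reduce_map_up_letter)

lemma up_fgw_gmul: "up_fgw (gmul a b) = gmul (up_fgw a) (up_fgw b)"
  by (simp add: gmul_def up_fgw_word_of Rep_up_fgw)

abbreviation egen :: "'s fgw \<Rightarrow> ('s, 'k::comm_ring_1) E" where
  "egen a \<equiv> Poly_Mapping.single a 1"

lemma lookup_escale [simp]: "Poly_Mapping.lookup (escale c f) a = c * Poly_Mapping.lookup f a"
proof -
  have "Poly_Mapping.lookup (escale c f) a =
      (\<Sum>b\<in>Poly_Mapping.keys f. if b = a then c * Poly_Mapping.lookup f a else 0)"
    unfolding escale_def lookup_sum by (rule sum.cong) (auto simp: lookup_single when_def)
  then show ?thesis by (auto simp: in_keys_iff)
qed

lemma escale_add: "escale c (f + g) = escale c f + escale c g"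
  by (rule poly_mapping_eqI) (simp add: lookup_add algebra_simps)

lemma escale_add_left: "escale (c + d) f = escale c f + escale d f"
  by (rule poly_mapping_eqI) (simp add: lookup_add algebra_simps)

lemma escale_zero [simp]: "escale c 0 = 0"
  by (rule poly_mapping_eqI) simp

lemma escale_zero_left [simp]: "escale 0 f = 0"
  by (rule poly_mapping_eqI) simp

lemma escale_one [simp]: "escale 1 f = f"
  by (rule poly_mapping_eqI) simp

lemma escale_escale: "escale c (escale d f) = escale (c * d) f"
  by (rule poly_mapping_eqI) (simp add: algebra_simps)

lemma uminus_eq_escale: "- f = escale (-1) f"
  by (rule poly_mapping_eqI) simp

lemma escale_single: "escale c (Poly_Mapping.single a d) = Poly_Mapping.single a (c * d)"
  by (rule poly_mapping_eqI) (simp add: lookup_single when_def)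

lemma escale_sum: "escale c (sum g A) = (\<Sum>x\<in>A. escale c (g x))"
  by (induction A rule: infinite_finite_induct) (auto simp: escale_add)

lemma elin_eq_sum:
  assumes "finite A" "Poly_Mapping.keys f \<subseteq> A"
  shows "elin h f = (\<Sum>a\<in>A. escale (Poly_Mapping.lookup f a) (h a))"
  unfolding elin_def using assms by (intro sum.mono_neutral_left) (auto simp: in_keys_iff)

lemma elin_add: "elin h (f + g) = elin h f + elin h g"
proof -
  let ?A = "Poly_Mapping.keys f \<union> Poly_Mapping.keys g \<union> Poly_Mapping.keys (f + g)"
  have "elin h (f + g) = (\<Sum>a\<in>?A. escale (Poly_Mapping.lookup (f + g) a) (h a))"
    by (rule elin_eq_sum) auto
  also have "\<dots> = (\<Sum>a\<in>?A. escale (Poly_Mapping.lookup f a) (h a))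
      + (\<Sum>a\<in>?A. escale (Poly_Mapping.lookup g a) (h a))"
    by (simp add: lookup_add escale_add_left sum.distrib)
  also have "\<dots> = elin h f + elin h g"
    by (subst (1 2) elin_eq_sum[of ?A]) auto
  finally show ?thesis .
qed

lemma elin_escale: "elin h (escale c f) = escale c (elin h f)"
proof -
  let ?A = "Poly_Mapping.keys f \<union> Poly_Mapping.keys (escale c f)"
  have "elin h (escale c f) = (\<Sum>a\<in>?A. escale (Poly_Mapping.lookup (escale c f) a) (h a))"
    by (rule elin_eq_sum) auto
  also have "\<dots> = escale c (\<Sum>a\<in>?A. escale (Poly_Mapping.lookup f a) (h a))"
    by (simp add: escale_sum escale_escale)
  also have "\<dots> = escale c (elin h f)"
    by (subst elin_eq_sum[of ?A]) auto
  finally show ?thesis .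
qed

lemma elin_single: "elin h (Poly_Mapping.single a c) = escale c (h a)"
  using elin_eq_sum[of "{a}" "Poly_Mapping.single a c" h] by simp

definition elinear :: "(('s, 'k::comm_ring_1) E \<Rightarrow> ('s, 'k) E) \<Rightarrow> bool" where
  "elinear T \<longleftrightarrow> (\<forall>f g. T (f + g) = T f + T g) \<and> (\<forall>c f. T (escale c f) = escale c (T f))"

lemma elinear_escaleD: "elinear T \<Longrightarrow> T (escale c f) = escale c (T f)"
  by (simp add: elinear_def)

lemma elinear_uminus: "elinear T \<Longrightarrow> T (- f) = - T f"
  by (simp add: elinear_def uminus_eq_escale)

lemma elinear_zero: "elinear T \<Longrightarrow> T 0 = 0"
  using elinear_escaleD[of T 0 0] by simp

lemma elinear_sum: "elinear T \<Longrightarrow> T (sum g A) = (\<Sum>x\<in>A. T (g x))"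
  by (induction A rule: infinite_finite_induct) (simp_all add: elinear_zero elinear_def)

lemma elinear_elin: "elinear (elin h)"
  by (simp add: elinear_def elin_add elin_escale)

lemma elinear_comp: "elinear T \<Longrightarrow> elinear S \<Longrightarrow> elinear (\<lambda>f. T (S f))"
  by (simp add: elinear_def)

lemma elinear_escale: "elinear (escale c)"
  by (simp add: elinear_def escale_add escale_escale mult.commute)

lemma elinear_eq_elin: "elinear T \<Longrightarrow> T f = elin (\<lambda>a. T (egen a)) f"
proof -
  assume T: "elinear T"
  have "f = (\<Sum>a\<in>Poly_Mapping.keys f. escale (Poly_Mapping.lookup f a) (egen a))"
    by (rule poly_mapping_eqI)
       (simp add: lookup_sum escale_single lookup_single when_def in_keys_iff)
  then have "T f = (\<Sum>a\<in>Poly_Mapping.keys f. T (escale (Poly_Mapping.lookup f a) (egen a)))"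
    by (metis elinear_sum[OF T])
  then show ?thesis
    by (simp add: elin_def elinear_escaleD[OF T])
qed

lemma elinear_eqI:
  assumes "elinear T" "elinear T'" "\<And>a. T (egen a) = T' (egen a)"
  shows "T f = T' f"
proof -
  have "T f = elin (\<lambda>a. T (egen a)) f" by (rule elinear_eq_elin[OF assms(1)])
  also have "\<dots> = elin (\<lambda>a. T' (egen a)) f" by (simp add: assms(3))
  also have "\<dots> = T' f" by (rule elinear_eq_elin[OF assms(2), symmetric])
  finally show ?thesis .
qed

lemma emul_eq_elin_left: "emul f g = elin (\<lambda>a. elin (\<lambda>b. egen (gmul a b)) g) f"
  unfolding emul_def elin_def by (simp add: escale_sum escale_single)

lemma emul_eq_elin_right: "emul f g = elin (\<lambda>b. elin (\<lambda>a. egen (gmul a b)) f) g"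
proof -
  have "elin (\<lambda>b. elin (\<lambda>a. egen (gmul a b)) f) g =
      (\<Sum>b\<in>Poly_Mapping.keys g. \<Sum>a\<in>Poly_Mapping.keys f.
         Poly_Mapping.single (gmul a b) (Poly_Mapping.lookup f a * Poly_Mapping.lookup g b))"
    unfolding elin_def by (simp add: escale_sum escale_single mult.commute)
  then show ?thesis unfolding emul_def by (simp add: sum.swap[of _ "Poly_Mapping.keys g"])
qed

lemma elinear_emul_left: "elinear (\<lambda>f. emul f g)"
  by (simp add: emul_eq_elin_left elinear_elin)

lemma elinear_emul_right: "elinear (\<lambda>g. emul f g)"
  by (simp add: emul_eq_elin_right elinear_elin)

lemma emul_egen: "emul (egen a) (egen b) = egen (gmul a b)"
  by (simp add: emul_eq_elin_left elin_single)

lemma elinear_up: "elinear up"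
  unfolding up_def by (rule elinear_elin)

lemma up_single: "up (Poly_Mapping.single a c) = Poly_Mapping.single (up_fgw a) c"
  unfolding up_def elin_single eword_def up_fgw_def by (simp add: escale_single)

lemma up_eword: "up (eword w) = eword (map up_letter w)"
  unfolding eword_def up_single up_fgw_word_of ..

lemma up_emul: "up (emul f g) = emul (up f) (up g)"
proof -
  have on_egen: "up (emul (egen a) g) = emul (up (egen a)) (up g)" for a
    by (rule elinear_eqI[OF elinear_comp[OF elinear_up elinear_emul_right]
                            elinear_comp[OF elinear_emul_right elinear_up]])
       (simp add: emul_egen up_single up_fgw_gmul)
  show ?thesis
    by (rule elinear_eqI[OF elinear_comp[OF elinear_up elinear_emul_left]
                            elinear_comp[OF elinear_emul_left elinear_up]])
       (rule on_egen)
qed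

lemma elinear_qD: "elinear (qD R \<rho>)"
  unfolding qD_def by (rule elinear_elin)

lemma qD_single: "qD R \<rho> (Poly_Mapping.single a c) = escale c (qD_word R \<rho> (Rep_fgw a))"
  unfolding qD_def by (rule elin_single)

lemma elin_egen_KSO: "elin (\<lambda>a. egen (KSO a)) f = f"
  using elinear_eq_elin[of "\<lambda>f. f" f] by (simp add: elinear_def KSO_def)

lemma qD_word_KSO:
  "qD_word R KSO w = (\<Sum>j<length w.
     emul (emul (eword (take j w)) (rule_letter R (w ! j))) (up (eword (drop (Suc j) w))))"
  unfolding qD_word_def elin_egen_KSO ..

lemma rule_letter_up_letter:
  assumes "\<And>s i. R (s, Suc i) = escale qvar (up (R (s, i)))"
  shows "rule_letter R (up_letter l) = escale qvar (up (rule_letter R l))"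
proof -
  obtain s i b where l: "l = ((s, i), b)" by (metis prod.exhaust)
  show ?thesis
    by (cases b)
       (simp_all add: l rule_letter_def up_letter_def assms elinear_uminus[OF elinear_up]
         up_emul up_eword elinear_uminus[OF elinear_escale]
         elinear_escaleD[OF elinear_emul_left] elinear_escaleD[OF elinear_emul_right])
qed

lemma qD_word_map_up_letter:
  assumes "\<And>s i. R (s, Suc i) = escale qvar (up (R (s, i)))"
  shows "qD_word R KSO (map up_letter w) = escale qvar (up (qD_word R KSO w))"
proof -
  have "escale qvar (up (emul (emul (eword (take j w)) (rule_letter R (w ! j)))
                               (up (eword (drop (Suc j) w))))) =
        emul (emul (eword (take j (map up_letter w))) (rule_letter R (map up_letter w ! j)))
             (up (eword (drop (Suc j) (map up_letter w))))"
    if "j < length w" for j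
    using that
    by (simp add: take_map drop_map up_eword[symmetric] rule_letter_up_letter[OF assms] up_emul
        elinear_escaleD[OF elinear_emul_left] elinear_escaleD[OF elinear_emul_right])
  then show ?thesis
    by (simp add: qD_word_KSO elinear_sum[OF elinear_up] elinear_sum[OF elinear_escale])
qed

lemma qD_up:
  assumes "\<And>s i. R (s, Suc i) = escale qvar (up (R (s, i)))"
  shows "qD R KSO (up f) = escale qvar (up (qD R KSO f))"
  by (rule elinear_eqI[OF elinear_comp[OF elinear_qD elinear_up]
                          elinear_comp[OF elinear_escale elinear_comp[OF elinear_up elinear_qD]]])
     (simp add: up_single qD_single Rep_up_fgw qD_word_map_up_letter[OF assms])

lemma funpow_commute_escale:
  assumes T: "elinear T" and U: "elinear U" and TU: "\<And>f. T (U f) = escale c (U (T f))"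
  shows "(T ^^ n) ((U ^^ m) f) = escale (c ^ (n * m)) ((U ^^ m) ((T ^^ n) f))"
proof -
  have T_Um: "T ((U ^^ m) g) = escale (c ^ m) ((U ^^ m) (T g))" for g
  proof (induction m)
    case (Suc m)
    then show ?case by (simp add: TU elinear_escaleD[OF U] escale_escale)
  qed simp
  show ?thesis
  proof (induction n)
    case (Suc n)
    then show ?case
      by (simp add: T_Um elinear_escaleD[OF T] escale_escale power_add mult.commute)
  qed simp
qed

theorem proposition4p6:
  fixes R :: "'s \<times> nat \<Rightarrow> ('s, 'k::{comm_ring_1, ring_char_0}) E"
    and \<rho> :: "'s fgw \<Rightarrow> 's fgw"
    and f :: "('s, 'k) E"
    and m n :: nat
  assumes "q_linear R \<rho>" and "m \<ge> 1" and "n \<ge> 1"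
  shows "(qD R \<rho> ^^ n) ((up ^^ m) f) = escale (qvar ^ (n * m)) ((up ^^ m) ((qD R \<rho> ^^ n) f))"
proof -
  have "\<rho> = KSO" and "\<And>s i. R (s, Suc i) = escale qvar (up (R (s, i)))"
    using assms(1) unfolding q_linear_def by auto
  then have "qD R \<rho> (up g) = escale qvar (up (qD R \<rho> g))" for g
    using qD_up by blast
  then show ?thesis
    by (rule funpow_commute_escale[OF elinear_qD elinear_up])
qed

end
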